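(* Let $k\ge1$ and $0\le r<k$ be integers. Then for every $n\ge1$, $$\sum_{j=0}^n(-1)^j\binom{r+1}{j}F^{(k)}_{k(n-j)+r}(x)=x^{r+1}F^{(k)}_{kn-1}(x),$$ and for every $n\ge1$ and every integer $i$ with $0<i<k+n$, $$\sum_{j=0}^{n-1}(-1)^{n-1-j}\binom{i-k+r}{n-1-j}x^kF^{(k)}_{kj+r}(x)=x^{r+i}F^{(k)}_{kn-i}(x).$$
   Context: Binomial coefficients are the generalized ones: for an integer $m$ (possibly negative) and an integer $j$, $\binom{m}{j}=\frac{m(m-1)\cdots(m-j+1)}{j!}$ if $j\ge 0$ and $\binom{m}{j}=0$ if $j<0$. For an integer $k\ge1$, the generalized Fibonacci polynomials $F^{(k)}_n(x)\in\mathbb{Z}[x]$ ($n\ge0$) are defined by $F^{(k)}_n(x)=x^n$ for $0\le n<k$ and $F^{(k)}_n(x)=xF^{(k)}_{n-1}(x)+F^{(k)}_{n-k}(x)$ for $n\ge k$. *)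

theory Defs
  imports "HOL-Computational_Algebra.Polynomial"
begin

text \<open>Generalized Fibonacci polynomials F^(k)_n(x) in Z[x]; only meaningful for k >= 1
  (the k = 0 branch is an arbitrary convention making the function total).\<close>
function genfib :: "nat \<Rightarrow> nat \<Rightarrow> int poly" where
  "genfib k n = (if k = 0 \<or> n < k then [:0, 1:] ^ n
                 else [:0, 1:] * genfib k (n - 1) + genfib k (n - k))"
  by auto
termination by (relation "measure snd") auto

definition gbinom :: "int \<Rightarrow> nat \<Rightarrow> int" where
  "gbinom m j = (\<Prod>i<j. m - int i) div int (fact j)"

end

theory Submission
  imports Defs "HOL.Binomial_Plus"
begin

text \<open>Write S a p for the sum over j \<le> p of (-1)^(p-j) binom(a, p-j) F(kj+r). Pascal's rule gives
  S (a+1) (p+1) = S a (p+1) - S a p. The Fibonacci recurrence shows that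
  G i p = x^(r+i) F(k(p+1)-i) obeys the same relation in the form
  G (i+1) (p+1) = G i (p+1) - G i p, where a corresponds to i - k + r. Since S 0 p = F(kp+r),
  the two sides x^k S (i-k+r) p and G i p agree at i = k - r; by induction on p they have equal
  increments in i and hence agree for all 0 < i < k + p + 1. The first identity is the case
  i = k + 1 after cancelling x^k.\<close>

declare genfib.simps [simp del]

lemma gbinom_Suc_Suc: "gbinom (m + 1) (Suc j) = gbinom m j + gbinom m (Suc j)"
  unfolding gbinom_def atLeast0LessThan[symmetric] of_nat_fact gbinomial_prod_rev[symmetric]
  by (rule gbinomial_int_Suc_Suc)

lemma gbinom_0_right [simp]: "gbinom m 0 = 1"
  by (simp add: gbinom_def)

lemma gbinom_0_left: "gbinom 0 j = (if j = 0 then 1 else 0)"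
  by (cases j) (simp_all add: gbinom_def prod.lessThan_Suc_shift del: prod.lessThan_Suc)

lemma genfib_eq_power: "n < k \<Longrightarrow> genfib k n = [:0, 1:] ^ n"
  by (subst genfib.simps) simp

lemma genfib_rec:
  "1 \<le> k \<Longrightarrow> k \<le> n \<Longrightarrow> genfib k n = [:0, 1:] * genfib k (n - 1) + genfib k (n - k)"
  by (subst genfib.simps) simp

lemma genfib_rec_diff:
  assumes "1 \<le> k" "i \<le> k * q"
  shows "genfib k (k * (q + 1) - i) = [:0, 1:] * genfib k (k * (q + 1) - Suc i) + genfib k (k * q - i)"
proof -
  have "k \<le> k * (q + 1) - i" "k * (q + 1) - i - k = k * q - i"
    using assms(2) by (simp_all add: algebra_simps)
  then show ?thesis using genfib_rec[OF assms(1)] by simp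
qed

lemma eq_on_interval_if_equal_increments:
  fixes f g :: "nat \<Rightarrow> 'a::ab_group_add"
  assumes incr: "\<And>i. lo \<le> i \<Longrightarrow> i < hi \<Longrightarrow> f (Suc i) - f i = g (Suc i) - g i"
    and anchor: "lo \<le> c" "c \<le> hi" "f c = g c"
    and i: "lo \<le> i" "i \<le> hi"
  shows "f i = g i"
proof (cases "c \<le> i")
  case True
  from this i(2) show ?thesis
  proof (induction i rule: dec_induct)
    case (step n)
    with incr[of n] anchor show ?case by (auto simp: algebra_simps)
  qed (use anchor in simp)
next
  case False
  have "lo \<le> j \<Longrightarrow> f j = g j" if "j \<le> c" for j
    using that
  proof (induction j rule: inc_induct)
    case (step n)
    with incr[of n] anchor show ?case by (auto simp: algebra_simps)
  qed (use anchor in simp)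
  with False i(1) show ?thesis by simp
qed

definition genfib_binom_sum :: "nat \<Rightarrow> nat \<Rightarrow> int \<Rightarrow> nat \<Rightarrow> int poly" where
  "genfib_binom_sum k r a p =
     (\<Sum>j=0..p. [:(-1) ^ (p - j) * gbinom a (p - j):] * genfib k (k * j + r))"

lemma genfib_binom_sum_0_right: "genfib_binom_sum k r a 0 = genfib k r"
  by (simp add: genfib_binom_sum_def)

lemma genfib_binom_sum_0_left: "genfib_binom_sum k r 0 p = genfib k (k * p + r)"
proof -
  have "genfib_binom_sum k r 0 p = (\<Sum>j=0..p. if j = p then genfib k (k * j + r) else 0)"
    unfolding genfib_binom_sum_def by (rule sum.cong) (auto simp: gbinom_0_left)
  then show ?thesis by simp
qed

lemma genfib_binom_sum_Suc_Suc:
  "genfib_binom_sum k r (a + 1) (Suc p) = genfib_binom_sum k r a (Suc p) - genfib_binom_sum k r a p"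
proof -
  let ?t = "\<lambda>a m j. [:(-1) ^ m * gbinom a m:] * genfib k (k * j + r)"
  have peel_last: "genfib_binom_sum k r a (Suc p)
      = genfib k (k * Suc p + r) + (\<Sum>j=0..p. ?t a (Suc (p - j)) j)" for a
    unfolding genfib_binom_sum_def by (simp add: Suc_diff_le)
  have pascal: "?t (a + 1) (Suc m) j = ?t a (Suc m) j - ?t a m j" for m j
    unfolding gbinom_Suc_Suc by (simp add: algebra_simps smult_add_left smult_diff_left)
  have "genfib_binom_sum k r (a + 1) (Suc p) =
      genfib k (k * Suc p + r) + (\<Sum>j=0..p. ?t a (Suc (p - j)) j) - (\<Sum>j=0..p. ?t a (p - j) j)"
    unfolding peel_last pascal sum_subtractf by (simp add: algebra_simps)
  then show ?thesis
    unfolding peel_last genfib_binom_sum_def[of k r a p] .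
qed

lemma genfib_binom_sum_closed_form:
  assumes k: "1 \<le> k" and r: "r < k" and i: "0 < i" "i < k + p + 1"
  shows "[:0, 1:] ^ k * genfib_binom_sum k r (int i - int k + int r) p
           = [:0, 1:] ^ (r + i) * genfib k (k * (p + 1) - i)"
  using i
proof (induction p arbitrary: i)
  case 0
  have "genfib k r = [:0, 1:] ^ r" "genfib k (k - i) = [:0, 1:] ^ (k - i)"
    using r 0 by (simp_all add: genfib_eq_power)
  moreover have "k + r = (r + i) + (k - i)"
    using 0 by simp
  ultimately show ?case
    by (simp add: genfib_binom_sum_0_right add.commute flip: power_add)
next
  case (Suc p)
  define f where "f i = [:0, 1:] ^ k * genfib_binom_sum k r (int i - int k + int r) (Suc p)" for i
  define g where "g i = [:0, 1:] ^ (r + i) * genfib k (k * (Suc p + 1) - i)" for i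
  have incr: "f (Suc i) - f i = g (Suc i) - g i" if "1 \<le> i" "i < k + p + 1" for i
  proof -
    have "f (Suc i) - f i = - ([:0, 1:] ^ k * genfib_binom_sum k r (int i - int k + int r) p)"
    proof -
      have a_Suc: "int (Suc i) - int k + int r = (int i - int k + int r) + 1"
        by simp
      show ?thesis
        unfolding f_def a_Suc genfib_binom_sum_Suc_Suc by (simp add: right_diff_distrib)
    qed
    also have "\<dots> = - ([:0, 1:] ^ (r + i) * genfib k (k * (p + 1) - i))"
      using Suc.IH that by simp
    also have "\<dots> = g (Suc i) - g i"
    proof -
      have "k + p \<le> k * (p + 1)"
        using k by simp
      with that have "i \<le> k * (p + 1)"
        by linarith
      from genfib_rec_diff[OF k this] have rec:
        "genfib k (k * (Suc p + 1) - i)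
           = [:0, 1:] * genfib k (k * (Suc p + 1) - Suc i) + genfib k (k * (p + 1) - i)"
        by simp
      show ?thesis
        unfolding g_def rec by (simp add: power_Suc2 distrib_left mult.assoc)
    qed
    finally show ?thesis .
  qed
  have anchor: "f (k - r) = g (k - r)"
  proof -
    have "int (k - r) - int k + int r = 0" "k * (Suc p + 1) - (k - r) = k * Suc p + r" "r + (k - r) = k"
      using r by (simp_all add: algebra_simps)
    then show ?thesis
      by (simp add: f_def g_def genfib_binom_sum_0_left add.assoc)
  qed
  have "f i = g i"
    using eq_on_interval_if_equal_increments
        [where lo = 1 and hi = "k + p + 1" and c = "k - r" and f = f and g = g, OF incr]
      anchor r Suc.prems by simp
  then show ?case by (simp add: f_def g_def)
qed

lemma genfib_binom_sum_rev:
  "genfib_binom_sum k r a n = (\<Sum>j=0..n. [:(-1) ^ j * gbinom a j:] * genfib k (k * (n - j) + r))"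
  unfolding genfib_binom_sum_def by (subst sum.atLeastAtMost_rev) (auto intro: sum.cong)

lemma genfib_binom_sum_Suc_r:
  assumes "1 \<le> k" "r < k" "1 \<le> n"
  shows "genfib_binom_sum k r (int r + 1) n = [:0, 1:] ^ (r + 1) * genfib k (k * n - 1)"
proof -
  have "[:0, 1:] ^ k * genfib_binom_sum k r (int (k + 1) - int k + int r) n
          = [:0, 1:] ^ (r + (k + 1)) * genfib k (k * (n + 1) - (k + 1))"
    using assms by (intro genfib_binom_sum_closed_form) auto
  then have "[:0, 1:] ^ k * genfib_binom_sum k r (int r + 1) n
               = [:0, 1:] ^ k * ([:0, 1:] ^ (r + 1) * genfib k (k * n - 1))"
    by (simp add: algebra_simps power_add)
  moreover have "[:0, 1:] ^ k \<noteq> (0 :: int poly)"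
    by simp
  ultimately show ?thesis
    by (metis mult_left_cancel)
qed

theorem lemma10:
  fixes k r :: nat
  assumes "k \<ge> 1" and "r < k"
  shows "(\<forall>n\<ge>1. (\<Sum>j=0..n. [:(-1) ^ j * gbinom (int r + 1) j:] * genfib k (k * (n - j) + r))
                   = [:0, 1:] ^ (r + 1) * genfib k (k * n - 1))
       \<and> (\<forall>n\<ge>1. \<forall>i::nat. 0 < i \<and> i < k + n \<longrightarrow>
            (\<Sum>j=0..n-1. [:(-1) ^ (n - 1 - j) * gbinom (int i - int k + int r) (n - 1 - j):]
                 * [:0, 1:] ^ k * genfib k (k * j + r))
            = [:0, 1:] ^ (r + i) * genfib k (k * n - i))"
proof (intro conjI allI impI)
  fix n :: nat
  assume "n \<ge> 1"
  from genfib_binom_sum_Suc_r[OF assms this]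
  show "(\<Sum>j=0..n. [:(-1) ^ j * gbinom (int r + 1) j:] * genfib k (k * (n - j) + r))
          = [:0, 1:] ^ (r + 1) * genfib k (k * n - 1)"
    unfolding genfib_binom_sum_rev .
next
  fix n i :: nat
  assume "n \<ge> 1" and i: "0 < i \<and> i < k + n"
  have "(\<Sum>j=0..n-1. [:(-1) ^ (n - 1 - j) * gbinom (int i - int k + int r) (n - 1 - j):]
           * [:0, 1:] ^ k * genfib k (k * j + r))
        = [:0, 1:] ^ k * genfib_binom_sum k r (int i - int k + int r) (n - 1)"
    unfolding genfib_binom_sum_def sum_distrib_left by (simp add: algebra_simps)
  also have "\<dots> = [:0, 1:] ^ (r + i) * genfib k (k * n - i)"
    using genfib_binom_sum_closed_form[OF assms, of i "n - 1"] \<open>n \<ge> 1\<close> i by simp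
  finally show "(\<Sum>j=0..n-1. [:(-1) ^ (n - 1 - j) * gbinom (int i - int k + int r) (n - 1 - j):]
                   * [:0, 1:] ^ k * genfib k (k * j + r))
                = [:0, 1:] ^ (r + i) * genfib k (k * n - i)" .
qed

end
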